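(* For every integer $n\geq 1$ there exists a $4$-dimensional Minkowski space $X$ whose norm is smooth and strictly convex and such that $m(X)\geq n$.
   Context: A Minkowski space is a finite-dimensional real normed space $(X,\|\cdot\|)$. For a set $S\subseteq X$, its midpoint set is $M(S)=\{\tfrac12(x+y): x,y\in S,\ x\neq y\}$. A set $S\subseteq X$ is an M-set if every vector in $M(S)$ has norm exactly $1$ and every vector in $S$ has norm strictly greater than $1$. $m(X)$ denotes the largest cardinality of an M-set in $X$ if such a largest finite cardinality exists, and $m(X)=\infty$ otherwise. The norm is smooth if each boundary point of the unit ball has a unique supporting hyperplane, and strictly convex if the unit sphere contains no nondegenerate line segment. *)

theory Defs
  imports "HOL-Analysis.Analysis" "HOL-Library.Extended_Nat"
begin

text \<open>A Minkowski space of dimension 4 is modelled (up to linear isometry) as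
  real^4 equipped with an arbitrary norm function N.\<close>

definition is_norm :: "(real^4 \<Rightarrow> real) \<Rightarrow> bool" where
  "is_norm N \<longleftrightarrow>
     (\<forall>x. N x = 0 \<longleftrightarrow> x = 0) \<and>
     (\<forall>x. N x \<ge> 0) \<and>
     (\<forall>c x. N (c *\<^sub>R x) = \<bar>c\<bar> * N x) \<and>
     (\<forall>x y. N (x + y) \<le> N x + N y)"

definition unit_ball_N :: "(real^4 \<Rightarrow> real) \<Rightarrow> (real^4) set" where
  "unit_ball_N N = {y. N y \<le> 1}"

definition unit_sphere_N :: "(real^4 \<Rightarrow> real) \<Rightarrow> (real^4) set" where
  "unit_sphere_N N = {y. N y = 1}"

definition supporting_hyperplane :: "(real^4) set \<Rightarrow> real^4 \<Rightarrow> (real^4) set \<Rightarrow> bool" where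
  "supporting_hyperplane B x H \<longleftrightarrow>
     (\<exists>a c. a \<noteq> 0 \<and> H = {y. a \<bullet> y = c} \<and> x \<in> H \<and> (\<forall>y\<in>B. a \<bullet> y \<le> c))"

definition smooth_norm :: "(real^4 \<Rightarrow> real) \<Rightarrow> bool" where
  "smooth_norm N \<longleftrightarrow>
     (\<forall>x\<in>unit_sphere_N N. \<exists>!H. supporting_hyperplane (unit_ball_N N) x H)"

definition strictly_convex_norm :: "(real^4 \<Rightarrow> real) \<Rightarrow> bool" where
  "strictly_convex_norm N \<longleftrightarrow>
     (\<forall>x y. x \<noteq> y \<longrightarrow> \<not> closed_segment x y \<subseteq> unit_sphere_N N)"

definition midpoint_set :: "(real^4) set \<Rightarrow> (real^4) set" where
  "midpoint_set S = {(1/2) *\<^sub>R (x + y) | x y. x \<in> S \<and> y \<in> S \<and> x \<noteq> y}"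

definition M_set :: "(real^4 \<Rightarrow> real) \<Rightarrow> (real^4) set \<Rightarrow> bool" where
  "M_set N S \<longleftrightarrow> (\<forall>v\<in>midpoint_set S. N v = 1) \<and> (\<forall>x\<in>S. N x > 1)"

definition m_val :: "(real^4 \<Rightarrow> real) \<Rightarrow> enat" where
  "m_val N =
     (if \<exists>k::nat. (\<exists>S. M_set N S \<and> finite S \<and> card S = k) \<and>
                 (\<forall>S. M_set N S \<longrightarrow> finite S \<and> card S \<le> k)
      then enat (GREATEST k. \<exists>S. M_set N S \<and> finite S \<and> card S = k)
      else \<infinity>)"

end

theory Submission
  imports Defs
begin

text \<open>
  The norm is the gauge (Minkowski functional) of the sublevel set {G \<le> 1} of a
  convex potential G. If G is even, vanishes at 0, grows at least quadratically,
  is strictly midpoint convex and has a subgradient g with a quadratic upper Taylor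
  bound, then the gauge is a norm whose unit sphere is exactly {G = 1}; strict
  convexity of G makes the norm strictly convex and the Taylor bound makes it smooth
  (locale convex_gauge). Any finite set A whose pairwise midpoints all lie on
  {G = 1} then yields an M-set of size at least |A| - 1.

  The potential is G x = eps |x|^2 + \<Sum> c_p \<phi>_\<tau>(b_p \<bullet> x), where \<phi>_\<tau> is a C^1 convex
  bump vanishing on [-\<tau>, \<tau>] (locale bump_potential). We take points \<gamma>(u) on the
  moment curve \<gamma>(u) = (u, u^2, u^3, u^4) for n + 1 separated parameters u \<in> [1, 2].
  For each pair p = (s, t) there is a linear functional a with
  a \<bullet> \<gamma>(u) = (s t)^2 - ((u - s)(u - t))^2; hence b_p = a / (s t)^2 equals 1 at the
  midpoint of \<gamma>(s), \<gamma>(t) and lies in [0, \<tau>] at every other pair midpoint. Choosing the weights c_p suitably makes G = 1 at all pair midpoints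
  (locale separated_nodes), and equally spaced parameters give the theorem.
\<close>

lemma eq_by_thresholds:
  fixes a b :: real
  assumes "0 \<le> a" "0 \<le> b" and "\<And>t. 0 < t \<Longrightarrow> a \<le> t \<longleftrightarrow> b \<le> t"
  shows "a = b"
proof (rule ccontr)
  assume "a \<noteq> b"
  define t where "t = (a + b) / 2"
  have "0 < t" "min a b < t" "t < max a b" using assms \<open>a \<noteq> b\<close> unfolding t_def by auto
  thus False using assms(3)[of t] by (auto simp: min_def max_def split: if_splits)
qed

text \<open>A linear functional that is nonpositive on the open half-space {v. w \<bullet> v < 0}
  is a nonnegative multiple of w; this is the uniqueness part of smoothness.\<close>
lemma multiple_of_normal:
  fixes a w :: "'a::real_inner"
  assumes "w \<noteq> 0" and descent: "\<And>v. w \<bullet> v < 0 \<Longrightarrow> a \<bullet> v \<le> 0"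
  shows "\<exists>\<mu>\<ge>0. a = \<mu> *\<^sub>R w"
proof -
  define \<mu> where "\<mu> = (a \<bullet> w) / (w \<bullet> w)"
  define r where "r = a - \<mu> *\<^sub>R w"
  have ww: "0 < w \<bullet> w" using assms by simp
  have wr: "w \<bullet> r = 0"
    unfolding r_def \<mu>_def using ww by (simp add: inner_diff_right inner_commute)
  have ar: "a \<bullet> r = r \<bullet> r"
    using wr unfolding r_def by (simp add: inner_diff_left inner_commute)
  have aw: "0 \<le> a \<bullet> w" using descent[of "- w"] ww by simp
  have "r \<bullet> r = 0"
  proof (rule ccontr)
    assume "r \<bullet> r \<noteq> 0"
    hence rr: "0 < r \<bullet> r" by simp
    define t where "t = (a \<bullet> w + 1) / (r \<bullet> r)"
    have "a \<bullet> (t *\<^sub>R r - w) \<le> 0"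
      using ww wr by (intro descent) (simp add: inner_diff_right)
    hence "t * (r \<bullet> r) \<le> a \<bullet> w" by (simp add: inner_diff_right ar)
    thus False using rr unfolding t_def by simp
  qed
  hence "a = \<mu> *\<^sub>R w" unfolding r_def by simp
  moreover have "0 \<le> \<mu>" unfolding \<mu>_def using aw ww by simp
  ultimately show ?thesis by blast
qed

lemma m_val_ge:
  assumes "M_set N S" "finite S" "n \<le> card S"
  shows "enat n \<le> m_val N"
proof (cases "\<exists>k::nat. (\<exists>S. M_set N S \<and> finite S \<and> card S = k) \<and>
                 (\<forall>S. M_set N S \<longrightarrow> finite S \<and> card S \<le> k)")
  case True
  then obtain k where "\<forall>S. M_set N S \<longrightarrow> finite S \<and> card S \<le> k" by blast
  hence "card S \<le> (GREATEST k. \<exists>S. M_set N S \<and> finite S \<and> card S = k)"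
    using assms by (intro Greatest_le_nat[where b = k]) auto
  thus ?thesis using True assms unfolding m_val_def by simp
next
  case False
  show ?thesis unfolding m_val_def by (subst if_not_P[OF False]) simp
qed

section \<open>The gauge of a convex potential\<close>

locale convex_gauge =
  fixes G :: "real^4 \<Rightarrow> real" and g :: "real^4 \<Rightarrow> real^4" and K :: "real^4 \<Rightarrow> real"
    and eps :: real
  assumes subgradient: "\<And>x y. G x + g x \<bullet> (y - x) \<le> G y"
    and quadratic_upper: "\<And>x t v. G (x + t *\<^sub>R v) \<le> G x + t * (g x \<bullet> v) + t\<^sup>2 * K v"
    and even: "\<And>x. G (- x) = G x"
    and zero: "G 0 = 0"
    and coercive: "\<And>x. eps * (x \<bullet> x) \<le> G x" and eps_pos: "0 < eps"
    and continuous: "\<And>x. isCont G x"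
    and strictly_midconvex: "\<And>x y. x \<noteq> y \<Longrightarrow> G (midpoint x y) < (G x + G y) / 2"
begin

lemma convex_combination:
  assumes "0 \<le> u" "u \<le> 1"
  shows "G ((1 - u) *\<^sub>R x + u *\<^sub>R y) \<le> (1 - u) * G x + u * G y"
proof -
  define z where "z = (1 - u) *\<^sub>R x + u *\<^sub>R y"
  have "(1 - u) * (G z + g z \<bullet> (x - z)) \<le> (1 - u) * G x"
    using subgradient assms by (intro mult_left_mono) auto
  moreover have "u * (G z + g z \<bullet> (y - z)) \<le> u * G y"
    using subgradient assms by (intro mult_left_mono) auto
  moreover have "(1 - u) * (g z \<bullet> (x - z)) + u * (g z \<bullet> (y - z)) = 0"
    unfolding z_def by (simp add: inner_diff_right inner_add_right algebra_simps)
  ultimately show ?thesis unfolding z_def[symmetric] by (simp add: algebra_simps)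
qed

lemma shrink: "0 \<le> s \<Longrightarrow> s \<le> 1 \<Longrightarrow> G (s *\<^sub>R x) \<le> s * G x"
  using convex_combination[of s 0 x] by (simp add: zero)

lemma nonneg: "0 \<le> G x"
  using coercive[of x] eps_pos by (smt (verit) inner_ge_zero mult_nonneg_nonneg)

definition gauge :: "real^4 \<Rightarrow> real" where
  "gauge x = Inf {l. 0 < l \<and> G (inverse l *\<^sub>R x) \<le> 1}"

lemma admissible_exists: "\<exists>l>0. G (inverse l *\<^sub>R x) \<le> 1"
proof -
  have "((\<lambda>l. inverse l *\<^sub>R x) \<longlongrightarrow> 0 *\<^sub>R x) at_top"
    by (intro tendsto_scaleR tendsto_inverse_0_at_top filterlim_ident tendsto_const)
  hence "((\<lambda>l. G (inverse l *\<^sub>R x)) \<longlongrightarrow> G 0) at_top"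
    using isCont_tendsto_compose[OF continuous] by simp
  hence "\<forall>\<^sub>F l in at_top. G (inverse l *\<^sub>R x) < 1 \<and> 0 < l"
    using zero by (intro eventually_conj order_tendstoD(2) eventually_gt_at_top) auto
  thus ?thesis by (metis (mono_tags, lifting) eventually_happens' less_le trivial_limit_at_top_linorder)
qed

text \<open>Admissible scaling factors are closed upwards, by convexity and G 0 = 0.\<close>
lemma admissible_up:
  assumes "0 < l" "G (inverse l *\<^sub>R x) \<le> 1" "l \<le> m"
  shows "G (inverse m *\<^sub>R x) \<le> 1"
proof -
  have "inverse m *\<^sub>R x = (l / m) *\<^sub>R (inverse l *\<^sub>R x)"
    using assms by (simp add: field_simps)
  also have "G \<dots> \<le> (l / m) * G (inverse l *\<^sub>R x)"
    using assms by (intro shrink) auto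
  also have "\<dots> \<le> 1"
    using assms by (smt (verit) divide_le_eq_1 mult_le_one zero_le_divide_iff nonneg)
  finally show ?thesis .
qed

lemma gauge_nonneg: "0 \<le> gauge x"
  unfolding gauge_def using admissible_exists[of x] by (intro cInf_greatest) auto

lemma gauge_le_iff:
  assumes t: "0 < t"
  shows "gauge x \<le> t \<longleftrightarrow> G (inverse t *\<^sub>R x) \<le> 1"
proof
  assume "G (inverse t *\<^sub>R x) \<le> 1"
  thus "gauge x \<le> t" unfolding gauge_def using t by (intro cInf_lower bdd_belowI[of _ 0]) auto
next
  assume le: "gauge x \<le> t"
  have "G (inverse m *\<^sub>R x) \<le> 1" if "t < m" for m
  proof -
    have "Inf {l. 0 < l \<and> G (inverse l *\<^sub>R x) \<le> 1} < m" using le that unfolding gauge_def by simp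
    then obtain l where "0 < l" "G (inverse l *\<^sub>R x) \<le> 1" "l < m"
      using admissible_exists[of x] by (subst (asm) cInf_less_iff) (auto intro: bdd_belowI[of _ 0])
    thus ?thesis using admissible_up by auto
  qed
  hence "\<forall>\<^sub>F m in at_right t. G (inverse m *\<^sub>R x) \<le> 1"
    by (simp add: eventually_at_right_field) (meson gt_ex)
  moreover have "((\<lambda>m. G (inverse m *\<^sub>R x)) \<longlongrightarrow> G (inverse t *\<^sub>R x)) (at_right t)"
    using t by (intro isCont_tendsto_compose[OF continuous] tendsto_scaleR tendsto_inverse
        tendsto_const) (auto intro: tendsto_ident_at)
  ultimately show "G (inverse t *\<^sub>R x) \<le> 1"
    by (intro tendsto_upperbound) auto
qed

lemma gauge_zero: "gauge 0 = 0"
  using gauge_nonneg by (intro eq_by_thresholds) (auto simp: gauge_le_iff zero)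

lemma even_sgn: "c \<noteq> 0 \<Longrightarrow> G (sgn c *\<^sub>R x) = G x"
  using even[of x] by (cases "c > 0") (auto simp: sgn_if)

text \<open>Absolute homogeneity, using that G is even.\<close>
lemma gauge_scale: "gauge (c *\<^sub>R x) = \<bar>c\<bar> * gauge x"
proof (cases "c = 0")
  case False
  have "gauge (c *\<^sub>R x) / \<bar>c\<bar> = gauge x"
  proof (rule eq_by_thresholds)
    fix t :: real assume t: "0 < t"
    have scaled: "inverse (\<bar>c\<bar> * t) *\<^sub>R (c *\<^sub>R x) = sgn c *\<^sub>R (inverse t *\<^sub>R x)"
      using False by (simp add: sgn_if)
    have "gauge (c *\<^sub>R x) \<le> \<bar>c\<bar> * t \<longleftrightarrow> G (inverse (\<bar>c\<bar> * t) *\<^sub>R (c *\<^sub>R x)) \<le> 1"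
      using t False by (intro gauge_le_iff) simp
    also have "\<dots> \<longleftrightarrow> gauge x \<le> t"
      unfolding scaled even_sgn[OF False] using gauge_le_iff[OF t] by simp
    finally have "gauge (c *\<^sub>R x) \<le> \<bar>c\<bar> * t \<longleftrightarrow> gauge x \<le> t" .
    thus "gauge (c *\<^sub>R x) / \<bar>c\<bar> \<le> t \<longleftrightarrow> gauge x \<le> t"
      using False by (simp add: divide_le_eq mult.commute)
  qed (use gauge_nonneg in auto)
  thus ?thesis using False by (simp add: field_simps)
qed (simp add: gauge_zero)

text \<open>Quadratic growth of G makes the unit ball bounded, so the gauge is definite.\<close>
lemma gauge_eq_0_iff: "gauge x = 0 \<longleftrightarrow> x = 0"
proof
  assume gx: "gauge x = 0"
  show "x = 0"
  proof (rule ccontr)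
    assume "x \<noteq> 0"
    hence xx: "0 < eps * (x \<bullet> x)" using eps_pos by simp
    define t where "t = sqrt (eps * (x \<bullet> x)) / 2"
    have t: "0 < t" "t\<^sup>2 = eps * (x \<bullet> x) / 4"
      unfolding t_def using xx by (auto simp: power_divide)
    have "eps * (x \<bullet> x) / t\<^sup>2 = eps * ((inverse t *\<^sub>R x) \<bullet> (inverse t *\<^sub>R x))"
      by (simp add: power2_eq_square field_simps)
    also have "\<dots> \<le> 1"
      using coercive gauge_le_iff[OF t(1), of x] gx t(1) by (smt (verit))
    finally show False using t xx eps_pos \<open>x \<noteq> 0\<close> by (simp add: field_simps)
  qed
qed (simp add: gauge_zero)

text \<open>Subadditivity, from convexity of G.\<close>
lemma gauge_triangle: "gauge (x + y) \<le> gauge x + gauge y"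
proof (rule field_le_epsilon)
  fix e :: real assume e: "0 < e"
  define a where "a = gauge x + e / 2"
  define b where "b = gauge y + e / 2"
  have ab: "0 < a" "0 < b" unfolding a_def b_def using gauge_nonneg[of x] gauge_nonneg[of y] e by auto
  have Ga: "G (inverse a *\<^sub>R x) \<le> 1"
    using gauge_le_iff[OF ab(1), of x] e by (simp add: a_def)
  have Gb: "G (inverse b *\<^sub>R y) \<le> 1"
    using gauge_le_iff[OF ab(2), of y] e by (simp add: b_def)
  define u where "u = b / (a + b)"
  have u: "0 \<le> u" "u \<le> 1" unfolding u_def using ab by auto
  have "inverse (a + b) *\<^sub>R (x + y) = (1 - u) *\<^sub>R (inverse a *\<^sub>R x) + u *\<^sub>R (inverse b *\<^sub>R y)"
    unfolding u_def using ab by (simp add: field_simps scaleR_add_right)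
  also have "G \<dots> \<le> (1 - u) * G (inverse a *\<^sub>R x) + u * G (inverse b *\<^sub>R y)"
    by (rule convex_combination[OF u])
  also have "\<dots> \<le> (1 - u) * 1 + u * 1"
    using u Ga Gb by (intro add_mono mult_left_mono) auto
  finally have "gauge (x + y) \<le> a + b" using gauge_le_iff[of "a + b"] ab by simp
  thus "gauge (x + y) \<le> gauge x + gauge y + e" unfolding a_def b_def by simp
qed

lemma is_norm_gauge: "is_norm gauge"
  unfolding is_norm_def using gauge_eq_0_iff gauge_nonneg gauge_scale gauge_triangle by blast

lemma gauge_le_1_iff: "gauge x \<le> 1 \<longleftrightarrow> G x \<le> 1"
  using gauge_le_iff[of 1 x] by simp

text \<open>Continuity of G is needed to see that G x < 1 keeps x strictly inside the unit ball.\<close>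
lemma gauge_less_1_iff: "gauge x < 1 \<longleftrightarrow> G x < 1"
proof
  assume less: "gauge x < 1"
  define t where "t = (gauge x + 1) / 2"
  have t: "0 < t" "t < 1" "gauge x \<le> t" unfolding t_def using less gauge_nonneg[of x] by auto
  have "G x = G (t *\<^sub>R (inverse t *\<^sub>R x))" using t by simp
  also have "\<dots> \<le> t * G (inverse t *\<^sub>R x)" using t by (intro shrink) auto
  also have "\<dots> \<le> t" using gauge_le_iff[OF t(1)] t by (simp add: mult_le_cancel_left1)
  finally show "G x < 1" using t by simp
next
  assume less: "G x < 1"
  have "((\<lambda>m. G (m *\<^sub>R x)) \<longlongrightarrow> G (1 *\<^sub>R x)) (at_right 1)"
    by (intro isCont_tendsto_compose[OF continuous] tendsto_scaleR tendsto_const)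
      (auto intro: tendsto_ident_at)
  hence "\<forall>\<^sub>F m in at_right 1. G (m *\<^sub>R x) < 1 \<and> 1 < m"
    using less by (intro eventually_conj order_tendstoD(2) eventually_at_right_less) auto
  then obtain m where m: "1 < m" "G (m *\<^sub>R x) < 1"
    using eventually_happens[of _ "at_right (1::real)"] by (auto simp: trivial_limit_at_right_real)
  hence "m * gauge x \<le> 1" using gauge_le_1_iff[of "m *\<^sub>R x"] gauge_scale[of m x] by simp
  hence "gauge x \<le> 1 / m" using m by (simp add: field_simps)
  thus "gauge x < 1" using m by (smt (verit) divide_less_eq_1_pos)
qed

lemma unit_ball_gauge: "unit_ball_N gauge = {y. G y \<le> 1}"
  unfolding unit_ball_N_def using gauge_le_1_iff by auto

lemma gauge_eq_1_iff: "gauge x = 1 \<longleftrightarrow> G x = 1"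
  using gauge_le_1_iff[of x] gauge_less_1_iff[of x] by linarith

lemma gauge_gt_1_iff: "1 < gauge x \<longleftrightarrow> 1 < G x"
  using gauge_le_1_iff[of x] by linarith

lemma unit_sphere_gauge: "unit_sphere_N gauge = {y. G y = 1}"
  unfolding unit_sphere_N_def using gauge_eq_1_iff by auto

lemma strictly_convex_gauge: "strictly_convex_norm gauge"
  unfolding strictly_convex_norm_def unit_sphere_gauge
proof (intro allI impI notI)
  fix x y :: "real^4" assume xy: "x \<noteq> y" and seg: "closed_segment x y \<subseteq> {y. G y = 1}"
  have "x \<in> closed_segment x y" "y \<in> closed_segment x y" "midpoint x y \<in> closed_segment x y"
    by auto
  hence "G x = 1" "G y = 1" "G (midpoint x y) = 1" using seg by blast+
  thus False using strictly_midconvex[OF xy] by simp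
qed

lemma descent:
  assumes slope: "g x \<bullet> v < 0"
  shows "\<exists>t>0. G (x + t *\<^sub>R v) < G x"
proof -
  define w where "w = - (g x \<bullet> v)"
  define t where "t = w / (2 * (\<bar>K v\<bar> + 1))"
  have w: "0 < w" using slope unfolding w_def by simp
  have t: "0 < t" unfolding t_def using w by (simp add: add_pos_nonneg)
  have "t * \<bar>K v\<bar> \<le> w / 2"
    unfolding t_def using w by (simp add: field_simps)
  have "t\<^sup>2 * K v \<le> t * (t * \<bar>K v\<bar>)"
    using t by (simp add: power2_eq_square mult_left_mono)
  also have "\<dots> \<le> t * (w / 2)"
    using t \<open>t * \<bar>K v\<bar> \<le> w / 2\<close> by (intro mult_left_mono) auto
  finally have "t\<^sup>2 * K v \<le> t * w / 2" by simp
  moreover have "t * (g x \<bullet> v) = - (t * w)" unfolding w_def by simp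
  moreover have "0 < t * w" using t w by simp
  ultimately have "G (x + t *\<^sub>R v) < G x"
    using quadratic_upper[of x t v] by linarith
  thus ?thesis using t by blast
qed

text \<open>The gradient does not vanish on the level set G = 1, as G 0 = 0 < 1.\<close>
lemma normal_nonzero: "G x = 1 \<Longrightarrow> g x \<noteq> 0"
  using subgradient[of x 0] zero by auto

lemma supporting_hyperplane_iff:
  assumes x: "G x = 1"
  shows "supporting_hyperplane {y. G y \<le> 1} x H \<longleftrightarrow> H = {y. g x \<bullet> y = g x \<bullet> x}"
proof
  assume "H = {y. g x \<bullet> y = g x \<bullet> x}"
  moreover have "g x \<bullet> y \<le> g x \<bullet> x" if "G y \<le> 1" for y
    using subgradient[of x y] x that by (simp add: inner_diff_right)
  ultimately show "supporting_hyperplane {y. G y \<le> 1} x H"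
    unfolding supporting_hyperplane_def using normal_nonzero[OF x] by auto
next
  assume "supporting_hyperplane {y. G y \<le> 1} x H"
  then obtain a c where a: "a \<noteq> 0" and H: "H = {y. a \<bullet> y = c}" and c: "c = a \<bullet> x"
    and below: "\<And>y. G y \<le> 1 \<Longrightarrow> a \<bullet> y \<le> c"
    unfolding supporting_hyperplane_def by auto
  have "a \<bullet> v \<le> 0" if slope: "g x \<bullet> v < 0" for v
  proof -
    obtain t where t: "0 < t" "G (x + t *\<^sub>R v) < G x" using descent[OF slope] by blast
    hence "t * (a \<bullet> v) \<le> 0" using below[of "x + t *\<^sub>R v"] x c by (simp add: inner_add_right)
    thus ?thesis using t by (simp add: mult_le_0_iff)
  qed
  then obtain \<mu> where "0 \<le> \<mu>" "a = \<mu> *\<^sub>R g x"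
    using multiple_of_normal[OF normal_nonzero[OF x]] by blast
  moreover have "\<mu> \<noteq> 0" using a \<open>a = \<mu> *\<^sub>R g x\<close> by auto
  ultimately show "H = {y. g x \<bullet> y = g x \<bullet> x}" unfolding H c by auto
qed

lemma smooth_gauge: "smooth_norm gauge"
  unfolding smooth_norm_def unit_sphere_gauge unit_ball_gauge
proof
  fix x assume "x \<in> {y. G y = 1}"
  thus "\<exists>!H. supporting_hyperplane {y. G y \<le> 1} x H"
    by (simp add: supporting_hyperplane_iff)
qed

text \<open>A finite set all of whose midpoints lie on the level set G = 1 contains an
  M-set of the gauge missing at most one of its points: strict midpoint convexity
  forbids two distinct points with G \<le> 1.\<close>
lemma M_set_from_level_midpoints:
  assumes A: "finite A"
    and mid: "\<And>x y. x \<in> A \<Longrightarrow> y \<in> A \<Longrightarrow> x \<noteq> y \<Longrightarrow> G (midpoint x y) = 1"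
  defines "S \<equiv> {x \<in> A. 1 < G x}"
  shows "M_set gauge S" and "card A \<le> card S + 1"
proof -
  show "M_set gauge S"
    unfolding M_set_def midpoint_set_def S_def
    using mid by (auto simp: gauge_eq_1_iff gauge_gt_1_iff midpoint_def)
  have few_low: "card (A - S) \<le> Suc 0"
    unfolding card_le_Suc0_iff_eq[OF finite_Diff[OF A]]
  proof (intro ballI, rule ccontr)
    fix x y assume "x \<in> A - S" "y \<in> A - S" "x \<noteq> y"
    hence "G x \<le> 1" "G y \<le> 1" "G (midpoint x y) = 1" using mid unfolding S_def by auto
    thus False using strictly_midconvex[OF \<open>x \<noteq> y\<close>] by simp
  qed
  have "S \<union> (A - S) = A" unfolding S_def by auto
  hence "card A \<le> card S + card (A - S)" using card_Un_le[of S "A - S"] by simp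
  with few_low show "card A \<le> card S + 1" by simp
qed

end

section \<open>A convex bump vanishing on an interval\<close>

definition ramp_sq :: "real \<Rightarrow> real" where "ramp_sq s = (max 0 s)\<^sup>2"

lemma ramp_sq_lower: "ramp_sq s + 2 * max 0 s * d \<le> ramp_sq (s + d)"
proof (cases "0 \<le> s")
  case True
  have "s\<^sup>2 + 2 * s * d \<le> (max 0 (s + d))\<^sup>2"
  proof (cases "0 \<le> s + d")
    case True
    have "(s + d)\<^sup>2 = s\<^sup>2 + 2 * s * d + d\<^sup>2" by (simp add: power2_eq_square algebra_simps)
    thus ?thesis using True by simp
  next
    case False
    have "s * (s + 2 * d) \<le> 0" using False \<open>0 \<le> s\<close> by (intro mult_nonneg_nonpos) auto
    thus ?thesis using False by (simp add: power2_eq_square algebra_simps)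
  qed
  thus ?thesis using True by (simp add: ramp_sq_def)
qed (simp add: ramp_sq_def)

text \<open>The second order error is at most d^2, since the second derivative is at most 2.\<close>
lemma ramp_sq_upper: "ramp_sq (s + d) \<le> ramp_sq s + 2 * max 0 s * d + d\<^sup>2"
proof (cases "0 \<le> s + d")
  case True
  show ?thesis
  proof (cases "0 \<le> s")
    case True
    have "(s + d)\<^sup>2 = s\<^sup>2 + 2 * s * d + d\<^sup>2" by (simp add: power2_eq_square algebra_simps)
    thus ?thesis using \<open>0 \<le> s + d\<close> True by (simp add: ramp_sq_def)
  next
    case False
    have "(s + d)\<^sup>2 \<le> d\<^sup>2" using \<open>0 \<le> s + d\<close> False by (intro power_mono) auto
    thus ?thesis using \<open>0 \<le> s + d\<close> False by (simp add: ramp_sq_def)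
  qed
next
  case False
  have "0 \<le> ramp_sq s + 2 * max 0 s * d + d\<^sup>2"
  proof (cases "0 \<le> s")
    case True
    have "0 \<le> (s + d)\<^sup>2" by simp
    thus ?thesis using True by (simp add: ramp_sq_def power2_eq_square algebra_simps)
  qed (simp add: ramp_sq_def)
  thus ?thesis using False by (simp add: ramp_sq_def)
qed

definition bump :: "real \<Rightarrow> real \<Rightarrow> real" where
  "bump \<tau> s = ramp_sq (s - \<tau>) + ramp_sq (- s - \<tau>)"

definition bump' :: "real \<Rightarrow> real \<Rightarrow> real" where
  "bump' \<tau> s = 2 * max 0 (s - \<tau>) - 2 * max 0 (- s - \<tau>)"

lemma bump_lower: "bump \<tau> s + bump' \<tau> s * d \<le> bump \<tau> (s + d)"
  using ramp_sq_lower[of "s - \<tau>" d] ramp_sq_lower[of "- s - \<tau>" "- d"]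
  by (simp add: bump_def bump'_def algebra_simps)

lemma bump_upper: "bump \<tau> (s + d) \<le> bump \<tau> s + bump' \<tau> s * d + 2 * d\<^sup>2"
  using ramp_sq_upper[of "s - \<tau>" d] ramp_sq_upper[of "- s - \<tau>" "- d"]
  by (simp add: bump_def bump'_def algebra_simps)

lemma bump_midconvex: "2 * bump \<tau> ((s + r) / 2) \<le> bump \<tau> s + bump \<tau> r"
  using bump_lower[of \<tau> "(s + r) / 2" "(s - r) / 2"] bump_lower[of \<tau> "(s + r) / 2" "(r - s) / 2"]
  by (simp add: field_simps)

lemma bump_even: "bump \<tau> (- s) = bump \<tau> s"
  by (simp add: bump_def add.commute)

lemma bump_nonneg: "0 \<le> bump \<tau> s"
  by (simp add: bump_def ramp_sq_def)

lemma bump_vanishes: "\<bar>s\<bar> \<le> \<tau> \<Longrightarrow> bump \<tau> s = 0"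
  by (simp add: bump_def ramp_sq_def)

lemma bump_one: "0 \<le> \<tau> \<Longrightarrow> \<tau> \<le> 1 \<Longrightarrow> bump \<tau> 1 = (1 - \<tau>)\<^sup>2"
  by (simp add: bump_def ramp_sq_def)

lemma continuous_bump: "isCont (bump \<tau>) s"
  unfolding bump_def ramp_sq_def by (intro continuous_intros)

section \<open>Potentials built from bumps\<close>

locale bump_potential =
  fixes P :: "'p set" and b :: "'p \<Rightarrow> real^4" and c :: "'p \<Rightarrow> real"
    and \<tau> :: real and eps :: real
  assumes finite_P: "finite P" and c_nonneg: "\<And>p. p \<in> P \<Longrightarrow> 0 \<le> c p"
    and \<tau>_nonneg: "0 \<le> \<tau>" and eps_pos: "0 < eps"
begin

definition G :: "real^4 \<Rightarrow> real" where
  "G x = eps * (x \<bullet> x) + (\<Sum>p\<in>P. c p * bump \<tau> (b p \<bullet> x))"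

definition grad :: "real^4 \<Rightarrow> real^4" where
  "grad x = (2 * eps) *\<^sub>R x + (\<Sum>p\<in>P. (c p * bump' \<tau> (b p \<bullet> x)) *\<^sub>R b p)"

definition curv :: "real^4 \<Rightarrow> real" where
  "curv v = eps * (v \<bullet> v) + (\<Sum>p\<in>P. 2 * c p * (b p \<bullet> v)\<^sup>2)"

lemma inner_grad:
  "grad x \<bullet> v = 2 * eps * (x \<bullet> v) + (\<Sum>p\<in>P. c p * bump' \<tau> (b p \<bullet> x) * (b p \<bullet> v))"
  by (simp add: grad_def inner_add_left inner_sum_left)

lemma subgradient: "G x + grad x \<bullet> (y - x) \<le> G y"
proof -
  define d where "d = y - x"
  have sums: "(\<Sum>p\<in>P. c p * bump \<tau> (b p \<bullet> x) + c p * bump' \<tau> (b p \<bullet> x) * (b p \<bullet> d))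
      \<le> (\<Sum>p\<in>P. c p * bump \<tau> (b p \<bullet> y))"
  proof (rule sum_mono)
    fix p assume p: "p \<in> P"
    have "bump \<tau> (b p \<bullet> x) + bump' \<tau> (b p \<bullet> x) * (b p \<bullet> d) \<le> bump \<tau> (b p \<bullet> y)"
      using bump_lower[of \<tau> "b p \<bullet> x" "b p \<bullet> d"] by (simp add: d_def inner_diff_right)
    from mult_left_mono[OF this c_nonneg[OF p]]
    show "c p * bump \<tau> (b p \<bullet> x) + c p * bump' \<tau> (b p \<bullet> x) * (b p \<bullet> d) \<le> c p * bump \<tau> (b p \<bullet> y)"
      by (simp add: distrib_left)
  qed
  have "y \<bullet> y = x \<bullet> x + 2 * (x \<bullet> d) + d \<bullet> d"
    unfolding d_def by (simp add: inner_diff_left inner_diff_right inner_commute)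
  hence "eps * (x \<bullet> x) + 2 * eps * (x \<bullet> d) \<le> eps * (y \<bullet> y)"
    using eps_pos by (simp add: algebra_simps)
  with sums show ?thesis
    unfolding G_def inner_grad d_def[symmetric] by (simp add: sum.distrib)
qed

lemma quadratic_upper: "G (x + t *\<^sub>R v) \<le> G x + t * (grad x \<bullet> v) + t\<^sup>2 * curv v"
proof -
  have sums: "(\<Sum>p\<in>P. c p * bump \<tau> (b p \<bullet> (x + t *\<^sub>R v)))
      \<le> (\<Sum>p\<in>P. c p * bump \<tau> (b p \<bullet> x) + t * (c p * bump' \<tau> (b p \<bullet> x) * (b p \<bullet> v))
          + t\<^sup>2 * (2 * c p * (b p \<bullet> v)\<^sup>2))"
  proof (rule sum_mono)
    fix p assume p: "p \<in> P"
    have "bump \<tau> (b p \<bullet> (x + t *\<^sub>R v))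
        \<le> bump \<tau> (b p \<bullet> x) + bump' \<tau> (b p \<bullet> x) * (t * (b p \<bullet> v)) + 2 * (t * (b p \<bullet> v))\<^sup>2"
      using bump_upper[of \<tau> "b p \<bullet> x" "t * (b p \<bullet> v)"] by (simp add: inner_add_right)
    from mult_left_mono[OF this c_nonneg[OF p]]
    show "c p * bump \<tau> (b p \<bullet> (x + t *\<^sub>R v)) \<le> c p * bump \<tau> (b p \<bullet> x)
        + t * (c p * bump' \<tau> (b p \<bullet> x) * (b p \<bullet> v)) + t\<^sup>2 * (2 * c p * (b p \<bullet> v)\<^sup>2)"
      by (simp add: power_mult_distrib algebra_simps)
  qed
  have "(x + t *\<^sub>R v) \<bullet> (x + t *\<^sub>R v) = x \<bullet> x + t * (2 * (x \<bullet> v)) + t\<^sup>2 * (v \<bullet> v)"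
    by (simp add: inner_add_left inner_add_right inner_commute power2_eq_square algebra_simps)
  with sums show ?thesis
    unfolding G_def inner_grad curv_def
    by (simp add: sum.distrib sum_distrib_left distrib_left mult.assoc)
qed

lemma strictly_midconvex:
  assumes "x \<noteq> y"
  shows "G (midpoint x y) < (G x + G y) / 2"
proof -
  have sums: "(\<Sum>p\<in>P. 2 * (c p * bump \<tau> (b p \<bullet> midpoint x y)))
      \<le> (\<Sum>p\<in>P. c p * bump \<tau> (b p \<bullet> x) + c p * bump \<tau> (b p \<bullet> y))"
  proof (rule sum_mono)
    fix p assume p: "p \<in> P"
    have "2 * bump \<tau> (b p \<bullet> midpoint x y) \<le> bump \<tau> (b p \<bullet> x) + bump \<tau> (b p \<bullet> y)"
      using bump_midconvex[of \<tau> "b p \<bullet> x" "b p \<bullet> y"]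
      by (simp add: midpoint_def inner_add_right)
    from mult_left_mono[OF this c_nonneg[OF p]]
    show "2 * (c p * bump \<tau> (b p \<bullet> midpoint x y))
        \<le> c p * bump \<tau> (b p \<bullet> x) + c p * bump \<tau> (b p \<bullet> y)"
      by (simp add: algebra_simps)
  qed
  have "4 * (eps * (midpoint x y \<bullet> midpoint x y))
      = 2 * (eps * (x \<bullet> x)) + 2 * (eps * (y \<bullet> y)) - eps * ((x - y) \<bullet> (x - y))"
    by (simp add: midpoint_def inner_add_left inner_add_right inner_diff_left inner_diff_right
        inner_commute algebra_simps)
  moreover have "0 < eps * ((x - y) \<bullet> (x - y))" using assms eps_pos by simp
  ultimately have "2 * (eps * (midpoint x y \<bullet> midpoint x y)) < eps * (x \<bullet> x) + eps * (y \<bullet> y)"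
    by linarith
  with sums show ?thesis
    unfolding G_def by (simp add: sum.distrib flip: sum_distrib_left)
qed

sublocale convex_gauge G grad curv eps
proof
  show "G (- x) = G x" for x by (simp add: G_def bump_even)
  show "G 0 = 0" using \<tau>_nonneg by (simp add: G_def bump_vanishes)
  show "eps * (x \<bullet> x) \<le> G x" for x
    unfolding G_def using c_nonneg bump_nonneg by (simp add: sum_nonneg)
  show "isCont G x" for x
    unfolding G_def by (intro continuous_intros isCont_o2[OF _ continuous_bump])
  show "G x + grad x \<bullet> (y - x) \<le> G y" for x y by (rule subgradient)
  show "G (x + t *\<^sub>R v) \<le> G x + t * (grad x \<bullet> v) + t\<^sup>2 * curv v" for x t v
    by (rule quadratic_upper)
  show "x \<noteq> y \<Longrightarrow> G (midpoint x y) < (G x + G y) / 2" for x y by (rule strictly_midconvex)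
qed (rule eps_pos)

end

section \<open>The moment curve in \<real>^4\<close>

definition vec4 :: "real \<Rightarrow> real \<Rightarrow> real \<Rightarrow> real \<Rightarrow> real^4" where
  "vec4 a b c d = (\<chi> i. if i = 1 then a else if i = 2 then b else if i = 3 then c else d)"

lemma inner_vec4: "vec4 a b c d \<bullet> vec4 a' b' c' d' = a * a' + b * b' + c * c' + d * d'"
  unfolding vec4_def inner_vec_def sum_4 by simp

definition moment :: "real \<Rightarrow> real^4" where
  "moment u = vec4 u (u\<^sup>2) (u ^ 3) (u ^ 4)"

text \<open>For a pair s, t the functional below takes the value (s t)^2 at \<gamma>(s) and \<gamma>(t)
  and is smaller at every other point of the moment curve.\<close>
definition chord_functional :: "real \<Rightarrow> real \<Rightarrow> real^4" where
  "chord_functional s t = vec4 (2 * (s + t) * (s * t)) (- ((s + t)\<^sup>2 + 2 * (s * t))) (2 * (s + t)) (- 1)"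

lemma chord_functional_moment:
  "chord_functional s t \<bullet> moment u = (s * t)\<^sup>2 - ((u - s) * (u - t))\<^sup>2"
  unfolding chord_functional_def moment_def inner_vec4
  by (simp add: power2_eq_square power3_eq_cube power4_eq_xxxx algebra_simps)

lemma moment_inj: "inj moment"
proof (rule injI)
  fix u v assume "moment u = moment v"
  hence "moment u $ 1 = moment v $ 1" by simp
  thus "u = v" by (simp add: moment_def vec4_def)
qed

lemma moment_norm_bound:
  assumes "0 \<le> u" "u \<le> 2"
  shows "moment u \<bullet> moment u \<le> 340"
proof -
  have "u\<^sup>2 \<le> 2\<^sup>2" "(u\<^sup>2)\<^sup>2 \<le> (2\<^sup>2)\<^sup>2" "(u ^ 3)\<^sup>2 \<le> (2 ^ 3)\<^sup>2" "(u ^ 4)\<^sup>2 \<le> (2 ^ 4)\<^sup>2"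
    using assms by (intro power_mono zero_le_power; simp)+
  thus ?thesis unfolding moment_def inner_vec4 by (simp add: power2_eq_square)
qed

definition pair_normal :: "real \<times> real \<Rightarrow> real^4" where
  "pair_normal p = inverse ((fst p * snd p)\<^sup>2) *\<^sub>R chord_functional (fst p) (snd p)"

definition pair_midpoint :: "real \<times> real \<Rightarrow> real^4" where
  "pair_midpoint p = midpoint (moment (fst p)) (moment (snd p))"

lemma pair_normal_midpoint:
  assumes "s * t \<noteq> 0"
  shows "pair_normal (s, t) \<bullet> pair_midpoint (u, v)
    = 1 - (((u - s) * (u - t))\<^sup>2 + ((v - s) * (v - t))\<^sup>2) / (2 * (s * t)\<^sup>2)"
  using assms unfolding pair_normal_def pair_midpoint_def midpoint_def
  by (simp add: inner_add_right chord_functional_moment field_simps)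

lemma defect_le_1:
  fixes s t w :: real
  assumes "\<bar>w - s\<bar> \<le> 1" "\<bar>w - t\<bar> \<le> 1"
  shows "((w - s) * (w - t))\<^sup>2 \<le> 1"
  using assms by (simp add: abs_square_le_1 abs_mult mult_le_one)

lemma defect_ge:
  fixes s t w d :: real
  assumes "0 \<le> d" "d \<le> \<bar>w - s\<bar>" "d \<le> \<bar>w - t\<bar>"
  shows "d ^ 4 \<le> ((w - s) * (w - t))\<^sup>2"
proof -
  have "d * d \<le> \<bar>(w - s) * (w - t)\<bar>" using assms by (simp add: abs_mult mult_mono)
  hence "(d * d)\<^sup>2 \<le> \<bar>(w - s) * (w - t)\<bar>\<^sup>2" using assms by (intro power_mono) auto
  thus ?thesis by (simp add: power2_eq_square power4_eq_xxxx)
qed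

section \<open>Separated nodes on the moment curve\<close>

locale separated_nodes =
  fixes T :: "real set" and d :: real
  assumes finite_T: "finite T" and T_range: "\<And>u. u \<in> T \<Longrightarrow> 1 \<le> u \<and> u \<le> 2"
    and d_pos: "0 < d" and d_le_1: "d \<le> 1"
    and separated: "\<And>u v. u \<in> T \<Longrightarrow> v \<in> T \<Longrightarrow> u \<noteq> v \<Longrightarrow> d \<le> \<bar>u - v\<bar>"
begin

definition pairs :: "(real \<times> real) set" where
  "pairs = {(s, t). s \<in> T \<and> t \<in> T \<and> s < t}"

definition \<tau> :: real where "\<tau> = 1 - d ^ 4 / 32"

lemma finite_pairs: "finite pairs"
  by (rule finite_subset[of _ "T \<times> T"]) (auto simp: pairs_def finite_T)

lemma \<tau>_range: "0 \<le> \<tau>" "\<tau> < 1"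
proof -
  have "d ^ 4 \<le> 1" "0 < d ^ 4" using d_pos d_le_1 by (auto simp: power_le_one)
  thus "0 \<le> \<tau>" "\<tau> < 1" unfolding \<tau>_def by auto
qed

lemma product_bounds:
  assumes "s \<in> T" "t \<in> T"
  shows "1 \<le> (s * t)\<^sup>2" "(s * t)\<^sup>2 \<le> 16"
proof -
  have s: "1 \<le> s" "s \<le> 2" and t: "1 \<le> t" "t \<le> 2" using T_range assms by auto
  have "1 * 1 \<le> s * t" "s * t \<le> 2 * 2" using s t by (intro mult_mono; simp)+
  hence "1\<^sup>2 \<le> (s * t)\<^sup>2" "(s * t)\<^sup>2 \<le> 4\<^sup>2" by (intro power_mono; simp)+
  thus "1 \<le> (s * t)\<^sup>2" "(s * t)\<^sup>2 \<le> 16" by simp_all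
qed

lemma pair_normal_own:
  assumes "p \<in> pairs"
  shows "pair_normal p \<bullet> pair_midpoint p = 1"
proof -
  obtain s t where p: "p = (s, t)" and "s \<in> T" "t \<in> T" using assms unfolding pairs_def by auto
  hence "s * t \<noteq> 0" using product_bounds(1) by fastforce
  thus ?thesis unfolding p by (simp add: pair_normal_midpoint)
qed

lemma pair_normal_other:
  assumes p: "p \<in> pairs" and q: "q \<in> pairs" and "p \<noteq> q"
  shows "\<bar>pair_normal p \<bullet> pair_midpoint q\<bar> \<le> \<tau>"
proof -
  obtain s t u v where pq: "p = (s, t)" "q = (u, v)" and T: "s \<in> T" "t \<in> T" "u \<in> T" "v \<in> T"
    and "s < t" "u < v"
    using p q unfolding pairs_def by auto
  define \<delta> where "\<delta> w = ((w - s) * (w - t))\<^sup>2" for w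
  have st: "1 \<le> (s * t)\<^sup>2" "(s * t)\<^sup>2 \<le> 16" using product_bounds T by auto
  have normal_value: "pair_normal p \<bullet> pair_midpoint q = 1 - (\<delta> u + \<delta> v) / (2 * (s * t)\<^sup>2)"
    unfolding pq \<delta>_def using st by (intro pair_normal_midpoint) auto
  have \<delta>_le_1: "\<delta> w \<le> 1" if "w \<in> T" for w
    unfolding \<delta>_def using T_range[OF that] T_range[OF T(1)] T_range[OF T(2)]
    by (intro defect_le_1) (auto simp: abs_le_iff)
  have "\<delta> u + \<delta> v \<le> 2 * (s * t)\<^sup>2" using \<delta>_le_1[OF T(3)] \<delta>_le_1[OF T(4)] st by linarith
  hence lower: "0 \<le> pair_normal p \<bullet> pair_midpoint q"
    unfolding normal_value using st by (simp add: divide_le_eq)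
  have "\<exists>w\<in>{u, v}. w \<noteq> s \<and> w \<noteq> t"
    using \<open>p \<noteq> q\<close> \<open>s < t\<close> \<open>u < v\<close> unfolding pq by auto
  then obtain w where w: "w \<in> {u, v}" "w \<noteq> s" "w \<noteq> t" by blast
  hence "w \<in> T" using T by auto
  hence "d ^ 4 \<le> \<delta> w"
    unfolding \<delta>_def using separated[OF \<open>w \<in> T\<close> T(1) w(2)] separated[OF \<open>w \<in> T\<close> T(2) w(3)] d_pos
    by (intro defect_ge) auto
  moreover have "0 \<le> \<delta> u" "0 \<le> \<delta> v" unfolding \<delta>_def by simp_all
  ultimately have "d ^ 4 \<le> \<delta> u + \<delta> v" using w by auto
  hence "d ^ 4 / 32 \<le> (\<delta> u + \<delta> v) / (2 * (s * t)\<^sup>2)"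
    using st \<open>0 \<le> \<delta> u\<close> \<open>0 \<le> \<delta> v\<close> by (intro frac_le) auto
  thus ?thesis using lower unfolding normal_value \<tau>_def by linarith
qed

text \<open>Pair midpoints have squared norm at most 340, so eps = 1/1000 keeps the
  weights below nonnegative.\<close>
lemma pair_midpoint_norm: "q \<in> pairs \<Longrightarrow> pair_midpoint q \<bullet> pair_midpoint q \<le> 340"
proof -
  assume "q \<in> pairs"
  then obtain u v where q: "q = (u, v)" and "u \<in> T" "v \<in> T" unfolding pairs_def by auto
  hence "0 \<le> u" "u \<le> 2" "0 \<le> v" "v \<le> 2" using T_range by force+
  hence bounds: "moment u \<bullet> moment u \<le> 340" "moment v \<bullet> moment v \<le> 340"
    by (simp_all add: moment_norm_bound)
  have "4 * (pair_midpoint q \<bullet> pair_midpoint q) + (moment u - moment v) \<bullet> (moment u - moment v)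
      = 2 * (moment u \<bullet> moment u) + 2 * (moment v \<bullet> moment v)"
    unfolding q pair_midpoint_def midpoint_def
    by (simp add: inner_add_left inner_add_right inner_diff_left inner_diff_right inner_commute
        field_simps)
  thus ?thesis using bounds inner_ge_zero[of "moment u - moment v"] by linarith
qed

definition eps :: real where "eps = 1 / 1000"

text \<open>Weights chosen so that the potential equals 1 exactly at every pair midpoint.\<close>
definition weight :: "real \<times> real \<Rightarrow> real" where
  "weight q = (1 - eps * (pair_midpoint q \<bullet> pair_midpoint q)) / (1 - \<tau>)\<^sup>2"

lemma weight_nonneg: "q \<in> pairs \<Longrightarrow> 0 \<le> weight q"
  using pair_midpoint_norm[of q] by (simp add: weight_def eps_def)

sublocale bump_potential pairs pair_normal weight \<tau> eps
  using finite_pairs weight_nonneg \<tau>_range by unfold_locales (auto simp: eps_def)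

text \<open>Only the bump of the pair q itself contributes at the midpoint of q.\<close>
lemma potential_at_pair_midpoint:
  assumes q: "q \<in> pairs"
  shows "G (pair_midpoint q) = 1"
proof -
  have "weight p * bump \<tau> (pair_normal p \<bullet> pair_midpoint q)
      = (if p = q then weight q * (1 - \<tau>)\<^sup>2 else 0)" if "p \<in> pairs" for p
    using pair_normal_own[OF q] pair_normal_other[OF that q] \<tau>_range
    by (auto simp: bump_one bump_vanishes)
  hence "(\<Sum>p\<in>pairs. weight p * bump \<tau> (pair_normal p \<bullet> pair_midpoint q)) = weight q * (1 - \<tau>)\<^sup>2"
    using q finite_pairs by (simp cong: sum.cong)
  thus ?thesis using \<tau>_range unfolding G_def weight_def by simp
qed

lemma potential_at_midpoints:
  assumes "u \<in> T" "v \<in> T" "u \<noteq> v"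
  shows "G (midpoint (moment u) (moment v)) = 1"
proof (cases "u < v")
  case True
  hence "(u, v) \<in> pairs" using assms unfolding pairs_def by auto
  thus ?thesis using potential_at_pair_midpoint unfolding pair_midpoint_def by fastforce
next
  case False
  hence "(v, u) \<in> pairs" using assms unfolding pairs_def by auto
  thus ?thesis using potential_at_pair_midpoint unfolding pair_midpoint_def
    by (fastforce simp: midpoint_sym)
qed

theorem M_set_of_nodes:
  "\<exists>N. is_norm N \<and> smooth_norm N \<and> strictly_convex_norm N \<and> enat (card T - 1) \<le> m_val N"
proof (intro exI conjI)
  let ?A = "moment ` T" and ?S = "{x \<in> moment ` T. 1 < G x}"
  have finite_A: "finite ?A" using finite_T by simp
  have "G (midpoint x y) = 1" if "x \<in> ?A" "y \<in> ?A" "x \<noteq> y" for x y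
    using that potential_at_midpoints by auto
  note S = M_set_from_level_midpoints[OF finite_A this]
  have "card ?A = card T" using card_image[OF inj_on_subset[OF moment_inj]] by simp
  thus "enat (card T - 1) \<le> m_val gauge"
    using S finite_A by (intro m_val_ge[of gauge ?S]) auto
qed (rule is_norm_gauge smooth_gauge strictly_convex_gauge)+

end

definition equispaced :: "nat \<Rightarrow> real set" where
  "equispaced n = (\<lambda>i. 1 + real i / (real n + 1)) ` {0..n}"

lemma card_equispaced: "card (equispaced n) = n + 1"
proof -
  have "inj_on (\<lambda>i. 1 + real i / (real n + 1)) {0..n}"
    by (rule inj_onI) (simp add: add_pos_nonneg)
  thus ?thesis unfolding equispaced_def by (simp add: card_image)
qed

lemma separated_equispaced: "separated_nodes (equispaced n) (1 / (real n + 1))"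
proof
  show "finite (equispaced n)" unfolding equispaced_def by simp
  show "0 < 1 / (real n + 1)" "1 / (real n + 1) \<le> 1" by auto
next
  fix u assume "u \<in> equispaced n"
  then obtain i where "i \<le> n" "u = 1 + real i / (real n + 1)" unfolding equispaced_def by auto
  thus "1 \<le> u \<and> u \<le> 2" by (simp add: divide_le_eq)
next
  fix u v assume "u \<in> equispaced n" "v \<in> equispaced n" "u \<noteq> v"
  then obtain i j where ij: "u = 1 + real i / (real n + 1)" "v = 1 + real j / (real n + 1)" "i \<noteq> j"
    unfolding equispaced_def by auto
  have "u - v = (real i - real j) / (real n + 1)" unfolding ij by (simp add: diff_divide_distrib)
  moreover have "1 \<le> \<bar>real i - real j\<bar>" using ij(3) by linarith
  ultimately show "1 / (real n + 1) \<le> \<bar>u - v\<bar>" by (simp add: divide_right_mono)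
qed

theorem theorem5:
  fixes n :: nat
  assumes "n \<ge> 1"
  shows "\<exists>N :: real^4 \<Rightarrow> real. is_norm N \<and> smooth_norm N \<and> strictly_convex_norm N
           \<and> m_val N \<ge> enat n"
proof -
  interpret separated_nodes "equispaced n" "1 / (real n + 1)"
    by (rule separated_equispaced)
  show ?thesis using M_set_of_nodes by (simp add: card_equispaced)
qed

end
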